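(* Let $\Omega\subset\mathbb{P}(\mathbb{R}^d)$ be a properly convex domain and $K\subset\Omega$ a compact subset. There exist $\varepsilon>0$ and $L>0$ such that for every $k\in\{1,\dots,d-1\}$ and every $g\in\mathrm{Aut}(\Omega)$ with $\frac{\sigma_k}{\sigma_{k+1}}(g)>L$, we have $\inf_{x\in K}\mathrm{dist}(x,\mathbb{P}(\Xi_k(g)))>\varepsilon$.
   Context: An open set $\Omega\subset\mathbb{P}(\mathbb{R}^d)$ is a properly convex domain if its closure is a bounded convex subset of some affine chart. $\mathrm{Aut}(\Omega)$ is the group of $g\in\mathsf{GL}_d(\mathbb{R})$ with $g\Omega=\Omega$. For $g$ with singular values $\sigma_1(g)\ge\dots\ge\sigma_d(g)$ and Cartan decomposition $g=k_g\mathrm{diag}(\sigma_1(g),\dots,\sigma_d(g))k_g'$ ($k_g,k_g'\in\mathsf{O}(d)$), if $\sigma_k(g)>\sigma_{k+1}(g)$ then $\Xi_k(g):=k_g\langle e_1,\dots,e_k\rangle$. $\mathbb{P}(\mathbb{R}^d)$ carries the metric $d_{\mathbb{P}}([u],[v])=\sqrt{1-\frac{\langle u,v\rangle^2}{\|u\|^2\|v\|^2}}$ and $\mathrm{dist}(x,Y)$ is the minimal $d_{\mathbb{P}}$-distance from $x$ to $Y$. *)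

theory Defs
  imports "HOL-Analysis.Analysis"
begin

text \<open>Model: R^d is real^'n with d = CARD('n). A subset of P(R^d) is represented by
  the cone of all its nonzero representatives.\<close>

definition cone_set :: "(real^'n) set \<Rightarrow> bool" where
  "cone_set C \<longleftrightarrow> 0 \<notin> C \<and> (\<forall>v\<in>C. \<forall>c. c \<noteq> 0 \<longrightarrow> c *\<^sub>R v \<in> C)"

text \<open>Properly convex domain: open, connected (nonempty), and its closure in P(R^d) lies in
  the affine chart {phi \<noteq> 0}, where (identified with the hyperplane {phi = 1}) it is bounded
  and convex.\<close>
definition properly_convex_domain :: "(real^'n) set \<Rightarrow> bool" where
  "properly_convex_domain \<Omega> \<longleftrightarrow> cone_set \<Omega> \<and> \<Omega> \<noteq> {} \<and> open \<Omega> \<and>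
     (\<exists>\<phi>::real^'n. (\<forall>v \<in> closure \<Omega> - {0}. \<phi> \<bullet> v \<noteq> 0) \<and>
        connected {v \<in> \<Omega>. \<phi> \<bullet> v = 1} \<and>
        bounded {v \<in> closure \<Omega>. \<phi> \<bullet> v = 1} \<and>
        convex {v \<in> closure \<Omega>. \<phi> \<bullet> v = 1})"

definition Aut :: "(real^'n) set \<Rightarrow> (real^'n^'n) set" where
  "Aut \<Omega> = {g. invertible g \<and> (\<lambda>v. g *v v) ` \<Omega> = \<Omega>}"

text \<open>A fixed enumeration of the standard basis: index j is e_(basis_pos j), positions 1..d.\<close>
definition basis_pos :: "'n::finite \<Rightarrow> nat" where
  "basis_pos = (SOME p. bij_betw p (UNIV::'n set) {1..CARD('n)})"

definition diag_sv :: "(nat \<Rightarrow> real) \<Rightarrow> real^'n^'n" where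
  "diag_sv s = (\<chi> i j. if i = j then s (basis_pos i) else 0)"

definition cartan :: "real^'n^'n \<Rightarrow> real^'n^'n \<Rightarrow> (nat \<Rightarrow> real) \<Rightarrow> real^'n^'n \<Rightarrow> bool" where
  "cartan g K s K' \<longleftrightarrow> orthogonal_matrix K \<and> orthogonal_matrix K' \<and>
     (\<forall>i j. 1 \<le> i \<longrightarrow> i \<le> j \<longrightarrow> j \<le> CARD('n) \<longrightarrow> s j \<le> s i) \<and>
     (\<forall>i. 1 \<le> i \<longrightarrow> i \<le> CARD('n) \<longrightarrow> 0 \<le> s i) \<and>
     (\<forall>i. i < 1 \<or> CARD('n) < i \<longrightarrow> s i = 0) \<and>
     g = K ** diag_sv s ** K'"

definition sing_val :: "real^'n^'n \<Rightarrow> nat \<Rightarrow> real" where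
  "sing_val g = (SOME s. \<exists>K K'. cartan g K s K')"

text \<open>Xi_k(g) = k_g <e_1,...,e_k>  (well defined when sigma_k(g) > sigma_(k+1)(g)).\<close>
definition Xi :: "nat \<Rightarrow> real^'n^'n \<Rightarrow> (real^'n) set" where
  "Xi k g = (SOME V. \<exists>K K'. cartan g K (sing_val g) K' \<and>
      V = (\<lambda>v. K *v v) ` span {axis j 1 | j. basis_pos j \<le> k})"

definition proj_dist :: "real^'n \<Rightarrow> real^'n \<Rightarrow> real" where
  "proj_dist u v = sqrt (1 - (u \<bullet> v)\<^sup>2 / ((norm u)\<^sup>2 * (norm v)\<^sup>2))"

definition dist_to_proj :: "real^'n \<Rightarrow> (real^'n) set \<Rightarrow> real" where
  "dist_to_proj x V = Inf {proj_dist x v | v. v \<in> V \<and> v \<noteq> 0}"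

end

theory Submission
  imports Defs
begin

(* Automorphisms of Omega have uniformly comparable norms at the points of K:
   |h u| |x| <= C |u| |h x| for h in Aut Omega, x in K.  Take a functional phi that does not
   vanish on Omega and whose slice {phi = 1} of Omega is bounded, so |y| <= R |phi y| on Omega.
   For h in Aut Omega the functional phi o h does not vanish on a ball of radius r around x,
   hence |phi o h| <= |phi (h x)| / r, and this bounds the operator norm of h by a multiple
   of |h x|.

   Apply this to h = g^-1 with g = k diag(sigma) k'.  Testing u = k e_d gives
   |h u| = 1/sigma_d, while |h x|^2 <= |x|^2/sigma_k^2 + T/sigma_d^2, where T is the squared
   norm of the coordinates of k^-1 x beyond the k-th.  A gap sigma_k/sigma_(k+1) > 2C thus
   forces 3 |x|^2 <= 4 C^2 T, and sqrt T / |x| bounds the projective distance from [x] to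
   P(Xi_k(g)) = P(k <e_1, ..., e_k>) from below.  Singular value decompositions exist by
   choosing successive maximisers of |g w| on orthogonal complements. *)

lemma orthogonal_matrix_inner:
  fixes Q :: "real^'n^'n"
  assumes "orthogonal_matrix Q"
  shows "(Q *v x) \<bullet> (Q *v y) = x \<bullet> y"
  using assms orthogonal_transformation_matrix[of "(*v) Q"]
  by (simp add: orthogonal_transformation_def)

lemma orthogonal_matrix_norm:
  fixes Q :: "real^'n^'n"
  assumes "orthogonal_matrix Q"
  shows "norm (Q *v x) = norm x"
  using assms orthogonal_transformation_matrix[of "(*v) Q"]
  by (simp add: orthogonal_transformation_norm)

lemma orthogonal_matrix_mult_transpose_vector:
  fixes Q :: "real^'n^'n"
  assumes "orthogonal_matrix Q"
  shows "Q *v (transpose Q *v x) = x"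
  using assms by (metis orthogonal_matrix_def matrix_vector_mul_assoc matrix_vector_mul_lid)

lemma power2_norm_vec_eq_sum: "(norm (w::real^'n))\<^sup>2 = (\<Sum>j\<in>UNIV. (w $ j)\<^sup>2)"
  unfolding power2_norm_eq_inner inner_vec_def by (simp add: power2_eq_square)

lemma basis_pos_bij: "bij_betw (basis_pos :: 'n::finite \<Rightarrow> nat) UNIV {1..CARD('n)}"
proof -
  have "\<exists>p. bij_betw p (UNIV::'n set) {1..CARD('n)}"
    by (rule finite_same_card_bij) auto
  then show ?thesis unfolding basis_pos_def by (rule someI_ex)
qed

lemma basis_pos_bounds: "1 \<le> basis_pos (j::'n::finite)" "basis_pos j \<le> CARD('n)"
  using bij_betwE[OF basis_pos_bij] by auto

lemma inj_basis_pos: "inj (basis_pos :: 'n::finite \<Rightarrow> nat)"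
  using basis_pos_bij unfolding bij_betw_def by blast

lemma basis_pos_surj:
  assumes "1 \<le> m" "m \<le> CARD('n)"
  obtains j :: "'n::finite" where "basis_pos j = m"
  using assms basis_pos_bij unfolding bij_betw_def by (metis atLeastAtMost_iff imageE)

section \<open>Cartan decompositions\<close>

(* The right singular vectors of g, chosen one at a time. *)
definition greedy_frame :: "real^'n^'n \<Rightarrow> nat \<Rightarrow> (nat \<Rightarrow> real^'n) \<Rightarrow> bool" where
  "greedy_frame g n u \<longleftrightarrow> (\<forall>i<n. \<forall>j<n. u i \<bullet> u j = (if i = j then 1 else 0)) \<and>
     (\<forall>i<n. \<forall>w. norm w = 1 \<and> (\<forall>j<i. w \<bullet> u j = 0) \<longrightarrow> norm (g *v w) \<le> norm (g *v u i))"

lemma exists_unit_orthogonal: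
  fixes u :: "nat \<Rightarrow> real^'n"
  assumes "n < CARD('n)"
  obtains a where "norm a = 1" "\<And>j. j < n \<Longrightarrow> a \<bullet> u j = 0"
proof -
  have "dim (u ` {..<n}) \<le> card (u ` {..<n})"
    by (rule dim_le_card) (auto intro: span_base)
  also have "\<dots> \<le> n" using card_image_le[of "{..<n}" u] by simp
  finally have "dim (u ` {..<n}) < DIM(real^'n)" using assms by simp
  then obtain b :: "real^'n" where b: "b \<noteq> 0" "span (u ` {..<n}) \<subseteq> {x. b \<bullet> x = 0}"
    using lowdim_subset_hyperplane by blast
  have "b \<bullet> u j = 0" if "j < n" for j
    using b(2) span_base[of "u j" "u ` {..<n}"] that by auto
  then show ?thesis using b(1) by (intro that[of "b /\<^sub>R norm b"]) (auto simp: inner_commute)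
qed

lemma greedy_frame_extend:
  fixes g :: "real^'n^'n"
  assumes u: "greedy_frame g n u" and n: "n < CARD('n)"
  shows "\<exists>w. greedy_frame g (Suc n) (u(n := w))"
proof -
  define S where "S = {w::real^'n. norm w = 1 \<and> (\<forall>j<n. w \<bullet> u j = 0)}"
  have "closed S" unfolding S_def
    by (intro closed_Collect_conj closed_Collect_all closed_Collect_imp closed_Collect_eq
        continuous_intros) auto
  moreover have "bounded S"
    by (rule bounded_subset[OF bounded_cball[of 0 1]]) (auto simp: S_def)
  ultimately have "compact S" using compact_eq_bounded_closed by blast
  moreover have "S \<noteq> {}"
    using exists_unit_orthogonal[OF n, of u] unfolding S_def by blast
  moreover have "continuous_on S (\<lambda>y. norm (g *v y))"
    by (intro continuous_on_norm matrix_vector_mult_linear_continuous_on)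
  ultimately obtain w where w: "w \<in> S" "\<And>y. y \<in> S \<Longrightarrow> norm (g *v y) \<le> norm (g *v w)"
    by (metis continuous_attains_sup)
  have wS: "norm w = 1" "\<And>j. j < n \<Longrightarrow> w \<bullet> u j = 0" using w(1) unfolding S_def by auto
  have "(u(n := w)) i \<bullet> (u(n := w)) j = (if i = j then 1 else 0)" if "i < Suc n" "j < Suc n" for i j
    using that u wS unfolding greedy_frame_def
    by (cases "i = n"; cases "j = n") (auto simp: inner_commute norm_eq_1)
  moreover have "norm (g *v v) \<le> norm (g *v (u(n := w)) i)"
    if "i < Suc n" "norm v = 1" "\<forall>j<i. v \<bullet> (u(n := w)) j = 0" for i v
  proof (cases "i = n")
    case True
    then show ?thesis using that w(2) unfolding S_def by auto
  next
    case False
    then show ?thesis using that u unfolding greedy_frame_def by auto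
  qed
  ultimately show ?thesis unfolding greedy_frame_def by blast
qed

lemma greedy_frame_exists:
  fixes g :: "real^'n^'n"
  shows "n \<le> CARD('n) \<Longrightarrow> \<exists>u. greedy_frame g n u"
proof (induction n)
  case 0
  then show ?case by (simp add: greedy_frame_def)
next
  case (Suc n)
  then show ?case using greedy_frame_extend by (metis Suc_le_lessD Suc_leD)
qed

lemma linear_le_quadratic_imp_zero:
  fixes a c :: real
  assumes "\<And>t. 2 * t * a \<le> t\<^sup>2 * c"
  shows "a = 0"
proof -
  define D where "D = \<bar>c\<bar> + 1"
  define t where "t = a / D"
  have a: "a = t * D" unfolding t_def D_def by simp
  have "2 * t * (t * D) \<le> t\<^sup>2 * c" using assms[of t] a by simp
  then have "t\<^sup>2 * (2 * D - c) \<le> 0" by (simp add: power2_eq_square algebra_simps)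
  moreover have "2 * D - c > 0" unfolding D_def by (simp add: abs_if)
  ultimately have "t = 0" by (simp add: mult_le_0_iff)
  then show ?thesis using a by simp
qed

lemma maximizer_image_orthogonal:
  fixes f :: "'a::real_inner \<Rightarrow> 'b::real_inner"
  assumes f: "linear f" and u: "norm u = 1" and w: "norm w = 1" and uw: "u \<bullet> w = 0"
    and max: "\<And>t. norm (f (u + t *\<^sub>R w)) \<le> norm (f u) * norm (u + t *\<^sub>R w)"
  shows "f u \<bullet> f w = 0"
proof (rule linear_le_quadratic_imp_zero)
  fix t
  have "(norm (f (u + t *\<^sub>R w)))\<^sup>2 = (norm (f u))\<^sup>2 + 2 * t * (f u \<bullet> f w) + t\<^sup>2 * (norm (f w))\<^sup>2"
    unfolding power2_norm_eq_inner
    by (simp add: linear_add[OF f] linear_scale[OF f] inner_add_left inner_add_right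
        inner_commute power2_eq_square algebra_simps)
  moreover have "(norm (u + t *\<^sub>R w))\<^sup>2 = 1 + t\<^sup>2"
    using u w uw unfolding power2_norm_eq_inner
    by (simp add: inner_add_left inner_add_right inner_commute power2_eq_square norm_eq_1)
  moreover have "(norm (f (u + t *\<^sub>R w)))\<^sup>2 \<le> (norm (f u))\<^sup>2 * (norm (u + t *\<^sub>R w))\<^sup>2"
    using max[of t] by (metis norm_ge_zero power_mono power_mult_distrib)
  ultimately show "2 * t * (f u \<bullet> f w) \<le> t\<^sup>2 * ((norm (f u))\<^sup>2 - (norm (f w))\<^sup>2)"
    by (simp add: algebra_simps)
qed

lemma greedy_frame_orthonormal:
  "greedy_frame g n u \<Longrightarrow> i < n \<Longrightarrow> j < n \<Longrightarrow> u i \<bullet> u j = (if i = j then 1 else 0)"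
  unfolding greedy_frame_def by blast

lemma greedy_frame_max:
  assumes "greedy_frame g n u" "i < n" "\<forall>j<i. w \<bullet> u j = 0"
  shows "norm (g *v w) \<le> norm (g *v u i) * norm w"
proof (cases "w = 0")
  case False
  then have "norm (g *v (w /\<^sub>R norm w)) \<le> norm (g *v u i)"
    using assms unfolding greedy_frame_def by auto
  then show ?thesis using False by (simp add: matrix_vector_mult_scaleR field_simps)
qed simp

lemma greedy_frame_norm_antimono:
  assumes G: "greedy_frame g n u" and ij: "i \<le> j" "j < n"
  shows "norm (g *v u j) \<le> norm (g *v u i)"
proof -
  have "\<forall>l<i. u j \<bullet> u l = 0" "norm (u j) = 1"
    using greedy_frame_orthonormal[OF G] ij by (auto simp: norm_eq_1)
  then show ?thesis using greedy_frame_max[OF G, of i "u j"] ij by simp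
qed

lemma greedy_frame_image_orthogonal:
  assumes G: "greedy_frame g n u" and ij: "i < j" "j < n"
  shows "(g *v u i) \<bullet> (g *v u j) = 0"
proof (rule maximizer_image_orthogonal[where f = "(*v) g"])
  show "linear ((*v) g)" by (rule matrix_vector_mul_linear)
  show "norm (u i) = 1" "norm (u j) = 1" "u i \<bullet> u j = 0"
    using greedy_frame_orthonormal[OF G] ij by (auto simp: norm_eq_1)
  fix t
  have "\<forall>l<i. (u i + t *\<^sub>R u j) \<bullet> u l = 0"
    using greedy_frame_orthonormal[OF G] ij by (auto simp: inner_add_left)
  then show "norm (g *v (u i + t *\<^sub>R u j)) \<le> norm (g *v u i) * norm (u i + t *\<^sub>R u j)"
    using greedy_frame_max[OF G] ij by simp
qed

lemma invertible_mult_vector_nonzero: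
  fixes g :: "real^'n^'n"
  assumes "invertible g" "x \<noteq> 0"
  shows "g *v x \<noteq> 0"
  using assms matrix_left_invertible_ker[of g] invertible_left_inverse[of g] by blast

lemma cartan_of_orthogonal_frame:
  fixes g :: "real^'n^'n" and v :: "'n \<Rightarrow> real^'n" and s :: "nat \<Rightarrow> real"
  defines "K \<equiv> \<chi> i j. (g *v v j) $ i / s (basis_pos j)" and "K' \<equiv> \<chi> j. v j"
  assumes inv: "invertible g"
    and v: "\<And>i j. v i \<bullet> v j = (if i = j then 1 else 0)"
    and gv: "\<And>i j. i \<noteq> j \<Longrightarrow> (g *v v i) \<bullet> (g *v v j) = 0"
    and s: "\<And>j. s (basis_pos j) = norm (g *v v j)"
  shows "orthogonal_matrix K" "orthogonal_matrix K'" "g = K ** diag_sv s ** K'"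
proof -
  have spos: "s (basis_pos j) > 0" for j :: 'n
  proof -
    have "v j \<noteq> 0" using v[of j j] by auto
    then show ?thesis using s[of j] invertible_mult_vector_nonzero[OF inv] by simp
  qed
  have "row i K' = v i" for i unfolding row_def K'_def by (simp add: vec_eq_iff)
  then show oK': "orthogonal_matrix K'"
    unfolding orthogonal_matrix_orthonormal_rows orthogonal_def using v by (simp add: norm_eq_1)
  have "column j K = (g *v v j) /\<^sub>R s (basis_pos j)" for j
    unfolding column_def K_def by (simp add: vec_eq_iff divide_inverse mult.commute)
  then show "orthogonal_matrix K"
    unfolding orthogonal_matrix_orthonormal_columns orthogonal_def using gv s spos by simp
  have "(K ** diag_sv s) $ i $ j = (g ** transpose K') $ i $ j" for i j
  proof -
    have "(K ** diag_sv s) $ i $ j = (\<Sum>l\<in>UNIV. if l = j then K $ i $ l * s (basis_pos l) else 0)"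
      unfolding matrix_matrix_mult_def diag_sv_def by (simp add: if_distrib cong: if_cong)
    also have "\<dots> = (g *v v j) $ i" unfolding K_def using spos[of j] by simp
    also have "\<dots> = (g ** transpose K') $ i $ j"
      unfolding matrix_matrix_mult_def matrix_vector_mult_def transpose_def K'_def by simp
    finally show ?thesis .
  qed
  then have "K ** diag_sv s = g ** transpose K'" by (simp add: vec_eq_iff)
  then have "K ** diag_sv s ** K' = g ** (transpose K' ** K')" by (simp add: matrix_mul_assoc)
  then show "g = K ** diag_sv s ** K'" using oK' by (simp add: orthogonal_matrix_def)
qed

lemma cartan_exists:
  fixes g :: "real^'n^'n"
  assumes inv: "invertible g"
  shows "\<exists>K s K'. cartan g K s K'"
proof -
  obtain u where G: "greedy_frame g CARD('n) u" using greedy_frame_exists by blast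
  \<comment> \<open>greedy indices start at 0, singular value positions at 1\<close>
  define v where "v j = u (basis_pos j - 1)" for j :: 'n
  define s where "s m = (if 1 \<le> m \<and> m \<le> CARD('n) then norm (g *v u (m - 1)) else 0)" for m
  have idx: "basis_pos j - 1 < CARD('n)" for j :: 'n using basis_pos_bounds[of j] by linarith
  have idx_eq: "basis_pos i - 1 = basis_pos j - 1 \<longleftrightarrow> i = j" for i j :: 'n
    using basis_pos_bounds[of i] basis_pos_bounds[of j] inj_eq[OF inj_basis_pos, of i j] by linarith
  have v: "v i \<bullet> v j = (if i = j then 1 else 0)" for i j
    unfolding v_def using greedy_frame_orthonormal[OF G idx idx] idx_eq by simp
  have gv: "(g *v v i) \<bullet> (g *v v j) = 0" if "i \<noteq> j" for i j
  proof (cases "basis_pos i - 1 < basis_pos j - 1")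
    case True
    then show ?thesis using greedy_frame_image_orthogonal[OF G True idx] unfolding v_def by simp
  next
    case False
    then have "basis_pos j - 1 < basis_pos i - 1" using idx_eq[of i j] that by linarith
    from greedy_frame_image_orthogonal[OF G this idx[of i]] show ?thesis
      unfolding v_def by (metis inner_commute)
  qed
  have "s (basis_pos j) = norm (g *v v j)" for j
    unfolding s_def v_def using basis_pos_bounds[of j] by simp
  note frame = cartan_of_orthogonal_frame[OF inv v gv this]
  have "s j \<le> s i" if "1 \<le> i" "i \<le> j" "j \<le> CARD('n)" for i j
    using greedy_frame_norm_antimono[OF G, of "i - 1" "j - 1"] that unfolding s_def by simp
  moreover have "0 \<le> s i" "i < 1 \<or> CARD('n) < i \<longrightarrow> s i = 0" for i
    unfolding s_def by auto
  ultimately show ?thesis using frame unfolding cartan_def by blast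
qed

lemma cartan_sing_val:
  fixes g :: "real^'n^'n"
  assumes "invertible g"
  shows "\<exists>Q Q'. cartan g Q (sing_val g) Q'"
proof -
  have "\<exists>s Q Q'. cartan g Q s Q'" using cartan_exists[OF assms] by blast
  then show ?thesis unfolding sing_val_def by (rule someI_ex)
qed

lemma Xi_cartan:
  fixes g :: "real^'n^'n"
  assumes "invertible g"
  shows "\<exists>Q Q'. cartan g Q (sing_val g) Q' \<and>
    Xi k g = (\<lambda>v. Q *v v) ` span {axis j 1 | j. basis_pos j \<le> k}"
proof -
  have "\<exists>V Q Q'. cartan g Q (sing_val g) Q' \<and> V = (\<lambda>v. Q *v v) ` span {axis j 1 | j. basis_pos j \<le> k}"
    using cartan_sing_val[OF assms] by blast
  then show ?thesis unfolding Xi_def by (rule someI_ex)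
qed

lemma diag_sv_mult_vector: "diag_sv s *v w = (\<chi> i. s (basis_pos i) * w $ i)"
  by (simp add: vec_eq_iff diag_sv_def matrix_vector_mult_def if_distrib[of "\<lambda>x. x * _"]
      cong: if_cong)

lemma cartan_mult_vector: "cartan g Q s Q' \<Longrightarrow> g *v y = Q *v (diag_sv s *v (Q' *v y))"
  unfolding cartan_def by (simp add: matrix_vector_mul_assoc matrix_mul_assoc)

lemma cartan_sing_val_pos:
  fixes g :: "real^'n^'n"
  assumes c: "cartan g Q s Q'" and inv: "invertible g" and m: "1 \<le> m" "m \<le> CARD('n)"
  shows "s m > 0"
proof (rule ccontr)
  obtain j :: 'n where j: "basis_pos j = m" using basis_pos_surj[OF m] .
  have oQ': "orthogonal_matrix Q'" using c unfolding cartan_def by blast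
  define x where "x = transpose Q' *v axis j 1"
  have Q'x: "Q' *v x = axis j 1"
    unfolding x_def by (rule orthogonal_matrix_mult_transpose_vector[OF oQ'])
  have "x \<noteq> 0" using Q'x by auto
  then have "g *v x \<noteq> 0" using invertible_mult_vector_nonzero[OF inv] by blast
  assume "\<not> s m > 0"
  then have "s m = 0" using c m unfolding cartan_def by force
  then have "diag_sv s *v axis j 1 = 0" unfolding diag_sv_mult_vector by (simp add: vec_eq_iff axis_def j)
  then have "g *v x = 0" using cartan_mult_vector[OF c, of x] Q'x by simp
  with \<open>g *v x \<noteq> 0\<close> show False ..
qed

lemma cartan_inverse_mult_vector:
  fixes g h :: "real^'n^'n"
  assumes c: "cartan g Q s Q'" and inv: "invertible g" and hg: "h ** g = mat 1"
  shows "h *v (Q *v w) = transpose Q' *v (\<chi> j. w $ j / s (basis_pos j))"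
proof -
  define q where "q = (\<chi> j. w $ j / s (basis_pos j))"
  have oQ': "orthogonal_matrix Q'" using c unfolding cartan_def by blast
  have "s (basis_pos j) \<noteq> 0" for j :: 'n
    using cartan_sing_val_pos[OF c inv basis_pos_bounds] by (metis less_irrefl)
  then have "diag_sv s *v q = w" unfolding diag_sv_mult_vector q_def by (simp add: vec_eq_iff)
  then have "g *v (transpose Q' *v q) = Q *v w"
    using cartan_mult_vector[OF c] orthogonal_matrix_mult_transpose_vector[OF oQ'] by simp
  then have "h *v (Q *v w) = h *v (g *v (transpose Q' *v q))" by simp
  also have "\<dots> = transpose Q' *v q" using hg by (simp add: matrix_vector_mul_assoc)
  finally show ?thesis unfolding q_def .
qed

lemma cartan_inverse_norm:
  fixes g h :: "real^'n^'n"
  assumes c: "cartan g Q s Q'" and inv: "invertible g" and hg: "h ** g = mat 1"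
  shows "(norm (h *v (Q *v w)))\<^sup>2 = (\<Sum>j\<in>UNIV. (w $ j / s (basis_pos j))\<^sup>2)"
proof -
  have oQ'T: "orthogonal_matrix (transpose Q')" using c unfolding cartan_def by simp
  show ?thesis
    unfolding cartan_inverse_mult_vector[OF assms] orthogonal_matrix_norm[OF oQ'T]
    by (simp add: power2_norm_vec_eq_sum)
qed

definition tail_sq :: "nat \<Rightarrow> real^'n \<Rightarrow> real" where
  "tail_sq k y = (\<Sum>j\<in>UNIV. if k < basis_pos j then (y $ j)\<^sup>2 else 0)"

lemma power2_divide_le: "0 < a \<Longrightarrow> a \<le> b \<Longrightarrow> (y / b)\<^sup>2 \<le> y\<^sup>2 / a\<^sup>2"
  for a b y :: real
  by (simp add: power_divide divide_left_mono power_mono)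

lemma cartan_inverse_norm_le:
  fixes g h :: "real^'n^'n"
  assumes c: "cartan g Q s Q'" and inv: "invertible g" and hg: "h ** g = mat 1"
    and k: "1 \<le> k" "k \<le> CARD('n)"
  shows "(norm (h *v (Q *v w)))\<^sup>2 \<le> (norm w)\<^sup>2 / (s k)\<^sup>2 + tail_sq k w / (s CARD('n))\<^sup>2"
proof -
  have spos: "s m > 0" if "1 \<le> m" "m \<le> CARD('n)" for m
    using cartan_sing_val_pos[OF c inv that] .
  have dec: "s j \<le> s i" if "1 \<le> i" "i \<le> j" "j \<le> CARD('n)" for i j
    using c that unfolding cartan_def by blast
  have "(w $ j / s (basis_pos j))\<^sup>2
      \<le> (w $ j)\<^sup>2 / (s k)\<^sup>2 + (if k < basis_pos j then (w $ j)\<^sup>2 else 0) / (s CARD('n))\<^sup>2" for j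
  proof (cases "k < basis_pos j")
    case True
    then have "(w $ j / s (basis_pos j))\<^sup>2 \<le> (w $ j)\<^sup>2 / (s CARD('n))\<^sup>2"
      using power2_divide_le spos dec basis_pos_bounds[of j] k by simp
    then show ?thesis using True by (simp add: add_increasing)
  next
    case False
    then have "(w $ j / s (basis_pos j))\<^sup>2 \<le> (w $ j)\<^sup>2 / (s k)\<^sup>2"
      using power2_divide_le spos dec basis_pos_bounds[of j] k by simp
    then show ?thesis using False by simp
  qed
  then have "(\<Sum>j\<in>UNIV. (w $ j / s (basis_pos j))\<^sup>2)
      \<le> (\<Sum>j\<in>UNIV. (w $ j)\<^sup>2 / (s k)\<^sup>2 + (if k < basis_pos j then (w $ j)\<^sup>2 else 0) / (s CARD('n))\<^sup>2)"
    by (rule sum_mono)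
  also have "\<dots> = (norm w)\<^sup>2 / (s k)\<^sup>2 + tail_sq k w / (s CARD('n))\<^sup>2"
    by (simp add: sum.distrib sum_divide_distrib power2_norm_vec_eq_sum tail_sq_def)
  finally show ?thesis using cartan_inverse_norm[OF c inv hg] by simp
qed

section \<open>Automorphisms of a properly convex domain\<close>

lemma Aut_inverse:
  assumes g: "g \<in> Aut \<Omega>" and hg: "h ** g = mat 1"
  shows "h \<in> Aut \<Omega>"
proof -
  have "invertible h" unfolding invertible_def using hg matrix_left_right_inverse by blast
  moreover have "(\<lambda>v. h *v v) ` \<Omega> = (\<lambda>v. h *v v) ` (\<lambda>v. g *v v) ` \<Omega>"
    using g unfolding Aut_def by simp
  then have "(\<lambda>v. h *v v) ` \<Omega> = \<Omega>"
    using hg by (simp add: image_image matrix_vector_mul_assoc)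
  ultimately show ?thesis unfolding Aut_def by blast
qed

lemma functional_ge_on_ball:
  fixes \<psi> x :: "'a::real_inner"
  assumes "\<And>z. z \<in> ball x r \<Longrightarrow> \<psi> \<bullet> z \<noteq> 0"
  shows "r * norm \<psi> \<le> \<bar>\<psi> \<bullet> x\<bar>"
proof (rule ccontr)
  assume "\<not> r * norm \<psi> \<le> \<bar>\<psi> \<bullet> x\<bar>"
  then have lt: "\<bar>\<psi> \<bullet> x\<bar> < r * norm \<psi>" by simp
  then have \<psi>: "norm \<psi> > 0" using abs_ge_zero[of "\<psi> \<bullet> x"] by (cases "\<psi> = 0") auto
  define z where "z = x - ((\<psi> \<bullet> x) / (norm \<psi>)\<^sup>2) *\<^sub>R \<psi>"
  have "dist x z = \<bar>\<psi> \<bullet> x\<bar> / norm \<psi>"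
    unfolding z_def dist_norm using \<psi> by (simp add: power2_eq_square)
  also have "\<dots> < r" using lt \<psi> by (simp add: divide_less_eq)
  finally have "\<psi> \<bullet> z \<noteq> 0" using assms by simp
  moreover have "\<psi> \<bullet> z = 0"
    unfolding z_def using \<psi> by (simp add: inner_diff_right power2_norm_eq_inner)
  ultimately show False by contradiction
qed

lemma linear_bound_from_ball:
  fixes f :: "'a::real_normed_vector \<Rightarrow> 'b::real_normed_vector"
  assumes f: "linear f" and r: "r > 0" and B: "\<And>y. y \<in> ball x r \<Longrightarrow> norm (f y) \<le> B"
  shows "norm (f u) \<le> 4 * B / r * norm u"
proof (cases "u = 0")
  case True
  then show ?thesis using linear_0[OF f] by simp
next
  case False
  define u' where "u' = (r / (2 * norm u)) *\<^sub>R u"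
  have "norm u' < r" using False r unfolding u'_def by simp
  then have "norm (f (x + u')) \<le> B" "norm (f x) \<le> B" using B r by (auto simp: dist_norm)
  then have fu': "norm (f u') \<le> 2 * B"
    using norm_triangle_ineq4[of "f (x + u')" "f x"] by (simp add: linear_add[OF f])
  have "norm (f u) = 2 * norm u / r * norm (f u')"
    using False r unfolding u'_def by (simp add: linear_scale[OF f])
  also have "\<dots> \<le> 2 * norm u / r * (2 * B)" using fu' r by (intro mult_left_mono) auto
  finally show ?thesis by (simp add: field_simps)
qed

lemma properly_convex_domain_norm_le_functional:
  fixes \<Omega> :: "(real^'n) set"
  assumes "properly_convex_domain \<Omega>"
  obtains \<phi> R where "R > 0" "\<And>w. w \<in> \<Omega> \<Longrightarrow> \<phi> \<bullet> w \<noteq> 0"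
    "\<And>w. w \<in> \<Omega> \<Longrightarrow> norm w \<le> R * \<bar>\<phi> \<bullet> w\<bar>"
proof -
  have z: "0 \<notin> \<Omega>" and sc: "\<And>v c. v \<in> \<Omega> \<Longrightarrow> c \<noteq> 0 \<Longrightarrow> c *\<^sub>R v \<in> \<Omega>"
    using assms unfolding properly_convex_domain_def cone_set_def by auto
  obtain \<phi> :: "real^'n" where nz: "\<And>v. v \<in> closure \<Omega> \<Longrightarrow> v \<noteq> 0 \<Longrightarrow> \<phi> \<bullet> v \<noteq> 0"
    and bd: "bounded {v \<in> closure \<Omega>. \<phi> \<bullet> v = 1}"
    using assms unfolding properly_convex_domain_def by blast
  obtain R where R: "R > 0" "\<And>v. v \<in> closure \<Omega> \<Longrightarrow> \<phi> \<bullet> v = 1 \<Longrightarrow> norm v \<le> R"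
    using bd unfolding bounded_pos by blast
  have \<phi>: "\<phi> \<bullet> w \<noteq> 0" if "w \<in> \<Omega>" for w
    using nz[of w] that z closure_subset by blast
  have "norm w \<le> R * \<bar>\<phi> \<bullet> w\<bar>" if w: "w \<in> \<Omega>" for w
  proof -
    define w' where "w' = (1 / (\<phi> \<bullet> w)) *\<^sub>R w"
    have "w' \<in> \<Omega>" unfolding w'_def using sc[OF w] \<phi>[OF w] by simp
    then have "w' \<in> closure \<Omega>" using closure_subset by blast
    moreover have "\<phi> \<bullet> w' = 1" unfolding w'_def using \<phi>[OF w] by simp
    ultimately have "norm w' \<le> R" using R(2) by blast
    then have "norm w / \<bar>\<phi> \<bullet> w\<bar> \<le> R" unfolding w'_def by simp
    moreover have "\<bar>\<phi> \<bullet> w\<bar> > 0" using \<phi>[OF w] by simp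
    ultimately show ?thesis by (simp add: pos_divide_le_eq)
  qed
  with R(1) \<phi> show ?thesis by (rule that)
qed

lemma Aut_norm_comparison_at:
  fixes \<Omega> :: "(real^'n) set" and h :: "real^'n^'n"
  assumes \<phi>: "\<And>w. w \<in> \<Omega> \<Longrightarrow> \<phi> \<bullet> w \<noteq> 0"
    and R: "R \<ge> 0" "\<And>w. w \<in> \<Omega> \<Longrightarrow> norm w \<le> R * \<bar>\<phi> \<bullet> w\<bar>"
    and h: "h \<in> Aut \<Omega>" and r: "r > 0" "ball x r \<subseteq> \<Omega>" and M: "norm x \<le> M"
  shows "norm (h *v u) * norm x \<le> 4 * R * (M + r) * M * norm \<phi> / r\<^sup>2 * norm u * norm (h *v x)"
proof -
  have h\<Omega>: "h *v y \<in> \<Omega>" if "y \<in> \<Omega>" for y using h that unfolding Aut_def by blast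
  define \<psi> where "\<psi> = transpose h *v \<phi>"
  have \<psi>: "\<psi> \<bullet> y = \<phi> \<bullet> (h *v y)" for y unfolding \<psi>_def by (simp add: dot_lmul_matrix)
  have "r * norm \<psi> \<le> \<bar>\<psi> \<bullet> x\<bar>"
    by (rule functional_ge_on_ball) (use r \<psi> \<phi> h\<Omega> in auto)
  also have "\<dots> \<le> norm \<phi> * norm (h *v x)" using \<psi> Cauchy_Schwarz_ineq2 by simp
  finally have \<psi>_le: "norm \<psi> \<le> norm \<phi> * norm (h *v x) / r" using r by (simp add: field_simps)
  have "norm (h *v y) \<le> R * norm \<psi> * (M + r)" if y: "y \<in> ball x r" for y
  proof -
    have "norm (h *v y) \<le> R * \<bar>\<psi> \<bullet> y\<bar>" using R(2) h\<Omega> r(2) y \<psi> by auto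
    also have "\<dots> \<le> R * (norm \<psi> * norm y)"
      using R(1) Cauchy_Schwarz_ineq2 by (intro mult_left_mono) auto
    also have "norm y \<le> M + r"
      using y M norm_triangle_ineq2[of y x] by (simp add: dist_norm norm_minus_commute)
    then have "R * (norm \<psi> * norm y) \<le> R * norm \<psi> * (M + r)"
      using R(1) by (simp add: mult_left_mono mult.assoc)
    finally show ?thesis .
  qed
  then have hu: "norm (h *v u) \<le> 4 * (R * norm \<psi> * (M + r)) / r * norm u"
    by (rule linear_bound_from_ball[OF matrix_vector_mul_linear r(1)])
  have M0: "M \<ge> 0" using M norm_ge_zero order_trans by blast
  have "norm (h *v u) * norm x \<le> 4 * (R * norm \<psi> * (M + r)) / r * norm u * M"
    using hu M order_trans[OF norm_ge_zero hu] by (intro mult_mono) auto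
  also have "\<dots> = 4 * R * (M + r) * M / r * norm u * norm \<psi>" by simp
  also have "\<dots> \<le> 4 * R * (M + r) * M / r * norm u * (norm \<phi> * norm (h *v x) / r)"
    using \<psi>_le R(1) r(1) M0 by (intro mult_left_mono) auto
  also have "\<dots> = 4 * R * (M + r) * M * norm \<phi> / r\<^sup>2 * norm u * norm (h *v x)"
    by (simp add: power2_eq_square)
  finally show ?thesis .
qed

lemma Aut_norm_comparison:
  fixes \<Omega> K :: "(real^'n) set"
  assumes \<Omega>: "properly_convex_domain \<Omega>" and K: "compact K" "K \<subseteq> \<Omega>"
  shows "\<exists>C>0. \<forall>h\<in>Aut \<Omega>. \<forall>x\<in>K. \<forall>u. norm (h *v u) * norm x \<le> C * norm u * norm (h *v x)"
proof -
  obtain \<phi> R where R: "R > 0" "\<And>w. w \<in> \<Omega> \<Longrightarrow> norm w \<le> R * \<bar>\<phi> \<bullet> w\<bar>"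
    and \<phi>: "\<And>w. w \<in> \<Omega> \<Longrightarrow> \<phi> \<bullet> w \<noteq> 0"
    using properly_convex_domain_norm_le_functional[OF \<Omega>] by metis
  have "open \<Omega>" "\<Omega> \<noteq> {}" using \<Omega> unfolding properly_convex_domain_def by auto
  then have "\<phi> \<noteq> 0" using \<phi> by fastforce
  obtain r where r: "r > 0" "(\<Union>x\<in>K. ball x r) \<subseteq> \<Omega>"
    using compact_subset_open_imp_ball_epsilon_subset[OF K(1) \<open>open \<Omega>\<close> K(2)] by blast
  obtain M where M: "M > 0" "\<And>x. x \<in> K \<Longrightarrow> norm x \<le> M"
    using compact_imp_bounded[OF K(1)] unfolding bounded_pos by blast
  have "4 * R * (M + r) * M * norm \<phi> / r\<^sup>2 > 0" using R(1) M(1) r(1) \<open>\<phi> \<noteq> 0\<close> by simp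
  moreover have "ball x r \<subseteq> \<Omega>" if "x \<in> K" for x using r(2) that by blast
  ultimately show ?thesis
    using Aut_norm_comparison_at[OF \<phi> less_imp_le[OF R(1)] R(2) _ r(1)] M(2) by blast
qed

section \<open>Distance to \<open>P(Xi_k(g))\<close>\<close>

lemma span_axis_coord_zero:
  assumes "w \<in> span {axis j (1::real) | j. basis_pos j \<le> k}" "k < basis_pos i"
  shows "w $ i = 0"
proof -
  have "subspace {w::real^'n. \<forall>i. k < basis_pos i \<longrightarrow> w $ i = 0}"
    unfolding subspace_def by auto
  moreover have "{axis j (1::real) | j. basis_pos j \<le> k} \<subseteq> {w. \<forall>i. k < basis_pos i \<longrightarrow> w $ i = 0}"
    by (auto simp: axis_def)
  ultimately show ?thesis using span_minimal assms by blast
qed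

lemma proj_dist_rotated_span_ge:
  fixes Q :: "real^'n^'n"
  assumes oQ: "orthogonal_matrix Q" and x: "x \<noteq> 0"
    and w: "w \<in> span {axis j 1 | j. basis_pos j \<le> k}" "w \<noteq> 0"
  shows "sqrt (tail_sq k (transpose Q *v x) / (norm x)\<^sup>2) \<le> proj_dist x (Q *v w)"
proof -
  define y where "y = transpose Q *v x"
  define y' where "y' = (\<chi> i. if basis_pos i \<le> k then y $ i else 0)"
  have xy: "x = Q *v y" unfolding y_def using orthogonal_matrix_mult_transpose_vector[OF oQ] by simp
  have "(norm y')\<^sup>2 + tail_sq k y = (norm y)\<^sup>2"
    unfolding power2_norm_vec_eq_sum tail_sq_def y'_def sum.distrib[symmetric]
    by (rule sum.cong) auto
  then have head: "(norm y')\<^sup>2 = (norm x)\<^sup>2 - tail_sq k y"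
    using xy orthogonal_matrix_norm[OF oQ] by simp
  have "x \<bullet> (Q *v w) = y \<bullet> w" using xy orthogonal_matrix_inner[OF oQ] by simp
  also have "\<dots> = y' \<bullet> w"
    unfolding inner_vec_def y'_def using span_axis_coord_zero[OF w(1)] by (intro sum.cong) auto
  finally have "\<bar>x \<bullet> (Q *v w)\<bar> \<le> norm y' * norm (Q *v w)"
    using Cauchy_Schwarz_ineq2 orthogonal_matrix_norm[OF oQ] by simp
  then have "(x \<bullet> (Q *v w))\<^sup>2 \<le> ((norm x)\<^sup>2 - tail_sq k y) * (norm (Q *v w))\<^sup>2"
    using head by (metis abs_ge_zero power2_abs power_mono power_mult_distrib)
  moreover have "norm (Q *v w) > 0" "norm x > 0"
    using w(2) x orthogonal_matrix_norm[OF oQ] by auto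
  ultimately have "tail_sq k y / (norm x)\<^sup>2 \<le> 1 - (x \<bullet> (Q *v w))\<^sup>2 / ((norm x)\<^sup>2 * (norm (Q *v w))\<^sup>2)"
    by (simp add: field_simps)
  then show ?thesis unfolding proj_dist_def y_def by (rule real_sqrt_le_mono)
qed

lemma dist_to_proj_rotated_span_ge:
  fixes Q :: "real^'n^'n"
  assumes oQ: "orthogonal_matrix Q" and x: "x \<noteq> 0" and k: "1 \<le> k"
  shows "sqrt (tail_sq k (transpose Q *v x) / (norm x)\<^sup>2)
    \<le> dist_to_proj x ((\<lambda>v. Q *v v) ` span {axis j 1 | j. basis_pos j \<le> k})"
  unfolding dist_to_proj_def
proof (rule cInf_greatest)
  obtain j :: 'n where "basis_pos j = 1" using basis_pos_surj[of 1] by auto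
  then have "Q *v axis j 1 \<in> (\<lambda>v. Q *v v) ` span {axis j 1 | j. basis_pos j \<le> k}"
    using k by (intro imageI span_base) auto
  moreover have "Q *v axis j 1 \<noteq> 0" using orthogonal_matrix_norm[OF oQ, of "axis j 1"] by auto
  ultimately show "{proj_dist x v | v. v \<in> (\<lambda>v. Q *v v) ` span {axis j 1 | j. basis_pos j \<le> k} \<and> v \<noteq> 0} \<noteq> {}"
    by blast
next
  fix r
  assume "r \<in> {proj_dist x v | v. v \<in> (\<lambda>v. Q *v v) ` span {axis j 1 | j. basis_pos j \<le> k} \<and> v \<noteq> 0}"
  then obtain w where "w \<in> span {axis j 1 | j. basis_pos j \<le> k}" "Q *v w \<noteq> 0" "r = proj_dist x (Q *v w)"
    by blast
  then show "sqrt (tail_sq k (transpose Q *v x) / (norm x)\<^sup>2) \<le> r"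
    using proj_dist_rotated_span_ge[OF oQ x] by fastforce
qed

lemma cartan_gap_tail_ge:
  fixes g h :: "real^'n^'n"
  assumes c: "cartan g Q s Q'" and inv: "invertible g" and hg: "h ** g = mat 1"
    and k: "1 \<le> k" "k < CARD('n)" and C: "C > 0" and gap: "2 * C * s (k + 1) < s k"
    and comp: "\<And>u. norm (h *v u) * norm x \<le> C * norm u * norm (h *v x)"
  shows "3 * (norm x)\<^sup>2 \<le> 4 * C\<^sup>2 * tail_sq k (transpose Q *v x)"
proof -
  define d where "d = CARD('n)"
  define y where "y = transpose Q *v x"
  have oQ: "orthogonal_matrix Q" and oQ'T: "orthogonal_matrix (transpose Q')"
    using c unfolding cartan_def by auto
  have xy: "Q *v y = x" unfolding y_def by (rule orthogonal_matrix_mult_transpose_vector[OF oQ])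
  have sd: "s d > 0" and sk: "s k > 0" using cartan_sing_val_pos[OF c inv] k unfolding d_def by auto
  have "s d \<le> s (k + 1)" using c k unfolding cartan_def d_def by auto
  then have "2 * C * s d \<le> 2 * C * s (k + 1)" using C by (intro mult_left_mono) auto
  then have "2 * C * s d < s k" using gap by linarith
  then have "C * s d / s k < 1 / 2" using sk by (simp add: field_simps)
  then have "(C * s d / s k)\<^sup>2 \<le> (1 / 2)\<^sup>2" using C sd sk by (intro power_mono) auto
  then have ratio: "(C * s d / s k)\<^sup>2 \<le> 1 / 4" by (simp add: power2_eq_square)
  obtain m :: 'n where m: "basis_pos m = d" using basis_pos_surj[of d] unfolding d_def by auto
  have "(\<chi> j. axis m 1 $ j / s (basis_pos j)) = (1 / s d) *\<^sub>R axis m (1::real)"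
    using m by (simp add: vec_eq_iff axis_def)
  then have "norm (h *v (Q *v axis m 1)) = 1 / s d"
    using cartan_inverse_mult_vector[OF c inv hg] orthogonal_matrix_norm[OF oQ'T] sd by simp
  moreover have "norm (Q *v axis m 1) = 1" using orthogonal_matrix_norm[OF oQ] by simp
  ultimately have "norm x / s d \<le> C * norm (h *v x)" using comp[of "Q *v axis m 1"] by simp
  then have "norm x \<le> C * s d * norm (h *v x)" using sd by (simp add: field_simps)
  then have "(norm x)\<^sup>2 \<le> (C * s d)\<^sup>2 * (norm (h *v x))\<^sup>2"
    by (metis norm_ge_zero power_mono power_mult_distrib)
  also have "\<dots> \<le> (C * s d)\<^sup>2 * ((norm y)\<^sup>2 / (s k)\<^sup>2 + tail_sq k y / (s d)\<^sup>2)"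
    using cartan_inverse_norm_le[OF c inv hg k(1)] k xy unfolding d_def
    by (intro mult_left_mono) auto
  also have "\<dots> = (C * s d / s k)\<^sup>2 * (norm x)\<^sup>2 + C\<^sup>2 * tail_sq k y"
    using sd sk orthogonal_matrix_norm[OF oQ, of y] xy
    by (simp add: power_divide power_mult_distrib field_simps)
  also have "\<dots> \<le> 1 / 4 * (norm x)\<^sup>2 + C\<^sup>2 * tail_sq k y"
    using ratio by (intro add_right_mono mult_right_mono) auto
  finally show ?thesis unfolding y_def by simp
qed

lemma dist_to_Xi_ge:
  fixes g h :: "real^'n^'n"
  assumes inv: "invertible g" and hg: "h ** g = mat 1" and k: "1 \<le> k" "k < CARD('n)"
    and C: "C > 0" and gap: "sing_val g k / sing_val g (k + 1) > 2 * C" and x: "x \<noteq> 0"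
    and comp: "\<And>u. norm (h *v u) * norm x \<le> C * norm u * norm (h *v x)"
  shows "sqrt (3 / (4 * C\<^sup>2)) \<le> dist_to_proj x (Xi k g)"
proof -
  obtain Q Q' where c: "cartan g Q (sing_val g) Q'"
    and Xi: "Xi k g = (\<lambda>v. Q *v v) ` span {axis j 1 | j. basis_pos j \<le> k}"
    using Xi_cartan[OF inv] by blast
  have "sing_val g (k + 1) > 0" using cartan_sing_val_pos[OF c inv] k by simp
  then have "2 * C * sing_val g (k + 1) < sing_val g k" using gap by (simp add: pos_less_divide_eq)
  then have "3 * (norm x)\<^sup>2 \<le> 4 * C\<^sup>2 * tail_sq k (transpose Q *v x)"
    by (rule cartan_gap_tail_ge[OF c inv hg k C _ comp])
  then have "3 / (4 * C\<^sup>2) \<le> tail_sq k (transpose Q *v x) / (norm x)\<^sup>2"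
    using C x by (simp add: field_simps)
  then have "sqrt (3 / (4 * C\<^sup>2)) \<le> sqrt (tail_sq k (transpose Q *v x) / (norm x)\<^sup>2)"
    by (rule real_sqrt_le_mono)
  also have "\<dots> \<le> dist_to_proj x (Xi k g)"
    unfolding Xi using dist_to_proj_rotated_span_ge[OF _ x k(1)] c unfolding cartan_def by blast
  finally show ?thesis .
qed

theorem lemma4p1:
  fixes \<Omega> K :: "(real^'n) set"
  assumes "properly_convex_domain \<Omega>" and "compact K" and "K \<subseteq> \<Omega>"
  shows "\<exists>\<epsilon>>0. \<exists>L>0. \<forall>k \<in> {1..CARD('n) - 1}. \<forall>g \<in> Aut \<Omega>.
           sing_val g k / sing_val g (k + 1) > L \<longrightarrow>
           (\<exists>\<delta>>\<epsilon>. \<forall>x\<in>K. \<delta> \<le> dist_to_proj x (Xi k g))"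
proof -
  obtain C where C: "C > 0"
    and comp: "\<forall>h\<in>Aut \<Omega>. \<forall>x\<in>K. \<forall>u. norm (h *v u) * norm x \<le> C * norm u * norm (h *v x)"
    using Aut_norm_comparison[OF assms] by blast
  have "0 \<notin> \<Omega>" using assms(1) unfolding properly_convex_domain_def cone_set_def by blast
  have far: "sqrt (3 / (4 * C\<^sup>2)) \<le> dist_to_proj x (Xi k g)"
    if k: "k \<in> {1..CARD('n) - 1}" and g: "g \<in> Aut \<Omega>"
      and gap: "sing_val g k / sing_val g (k + 1) > 2 * C" and x: "x \<in> K" for k g x
  proof -
    have inv: "invertible g" using g unfolding Aut_def by blast
    then obtain h where hg: "h ** g = mat 1" using invertible_left_inverse by blast
    have "x \<noteq> 0" using x assms(3) \<open>0 \<notin> \<Omega>\<close> by blast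
    then show ?thesis
      using dist_to_Xi_ge[OF inv hg _ _ C gap] comp Aut_inverse[OF g hg] x k by auto
  qed
  have "1 / (2 * C) = sqrt (1 / (4 * C\<^sup>2))" using C by (simp add: real_sqrt_divide real_sqrt_mult)
  also have "\<dots> < sqrt (3 / (4 * C\<^sup>2))" using C by (simp add: divide_strict_right_mono)
  finally show ?thesis using C far
    by (intro exI[of _ "1 / (2 * C)"] conjI exI[of _ "2 * C"] ballI impI
        exI[of _ "sqrt (3 / (4 * C\<^sup>2))"]) auto
qed

end
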